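(* Let $A \in \mathbb{C}^{n \times n}$, and fix $A^-\in A\{1\}$ and $A^{GD}\in A\{GD\}$. For $X\in\mathbb{C}^{n\times n}$ the following are equivalent: (i) $X = A^{GD}AA^{-}$; (ii) $XAX =X$, $XA= A^{GD}A$, $AX = AA^{-}$, and $AXA = A$; (iii) $XAX =X$, $XA= A^{GD}A$, and $AX = AA^{-}$; (iv) $A^{GD}AX =X$, $XA= A^{GD}A$, $AX = AA^{-}$, and $XAA^{-} = X$.
   Context: For $A\in\mathbb{C}^{n\times n}$, $ind(A)$ is the smallest nonnegative integer $k$ with $\mathrm{rank}(A^k)=\mathrm{rank}(A^{k+1})$. $A\{1\}$ is the set of matrices $X$ with $AXA=A$. With $k=ind(A)$, $A\{GD\}$ is the set of G-Drazin inverses of $A$: matrices $X$ with $AXA=A$, $XA^{k+1}=A^k$, $A^{k+1}X=A^k$. *)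

theory Defs
  imports "HOL-Analysis.Analysis"
begin

definition matpow :: "'a::comm_ring_1^'n^'n \<Rightarrow> nat \<Rightarrow> 'a^'n^'n" where
  "matpow A k = ((\<lambda>M. A ** M) ^^ k) (mat 1)"

definition ind :: "'a::field^'n^'n \<Rightarrow> nat" where
  "ind A = (LEAST k. rank (matpow A k) = rank (matpow A (Suc k)))"

definition inner_inverses :: "'a::field^'n^'n \<Rightarrow> ('a^'n^'n) set" where
  "inner_inverses A = {X. A ** X ** A = A}"

definition gdrazin_inverses :: "'a::field^'n^'n \<Rightarrow> ('a^'n^'n) set" where
  "gdrazin_inverses A = {X. A ** X ** A = A
      \<and> X ** matpow A (Suc (ind A)) = matpow A (ind A)
      \<and> matpow A (Suc (ind A)) ** X = matpow A (ind A)}"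

end

theory Submission
  imports Defs
begin

text \<open>Only the inner-inverse property \<open>A A\<^sup>- A = A\<close> of \<open>A\<^sup>-\<close> and \<open>A A\<^sup>G\<^sup>D A = A\<close> of \<open>A\<^sup>G\<^sup>D\<close> is
  needed: for any two inner inverses \<open>G\<close>, \<open>M\<close> of \<open>A\<close>, the product \<open>G A M\<close> is the unique
  outer inverse \<open>X\<close> (\<open>X A X = X\<close>) with \<open>X A = G A\<close> and \<open>A X = A M\<close>, and the remaining
  conditions are rewritings of \<open>X A X = X\<close> by means of these two equations.\<close>

lemma outer_inverse_unique:
  fixes A :: "'a::semiring_1^'n^'m" and G M X :: "'a^'m^'n"
  assumes "X ** A ** X = X" "X ** A = G ** A" "A ** X = A ** M"
  shows "X = G ** A ** M"
  using assms by (metis matrix_mul_assoc)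

lemma outer_inverse_of_inner_inverses:
  fixes A :: "'a::semiring_1^'n^'m" and G M :: "'a^'m^'n"
  assumes G: "A ** G ** A = A" and M: "A ** M ** A = A"
  shows "G ** A ** M ** A = G ** A"
    and "A ** (G ** A ** M) = A ** M"
    and "G ** A ** M ** A ** (G ** A ** M) = G ** A ** M"
proof -
  show right: "G ** A ** M ** A = G ** A"
    using M by (metis matrix_mul_assoc)
  show "A ** (G ** A ** M) = A ** M"
    using G by (metis matrix_mul_assoc)
  then show "G ** A ** M ** A ** (G ** A ** M) = G ** A ** M"
    using right by (metis matrix_mul_assoc)
qed

lemma inner_inverse_if_right_products_eq:
  fixes A :: "'a::semiring_1^'n^'m" and M X :: "'a^'m^'n"
  assumes "A ** M ** A = A" "A ** X = A ** M"
  shows "A ** X ** A = A"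
  using assms by simp

lemma outer_inverse_eqs_if_products_eq:
  fixes A :: "'a::semiring_1^'n^'m" and G M X :: "'a^'m^'n"
  assumes "X ** A = G ** A" "A ** X = A ** M"
  shows "G ** A ** X = X ** A ** X" and "X ** A ** M = X ** A ** X"
  using assms by (metis matrix_mul_assoc)+

theorem theorem2p8:
  fixes A Am AGD X :: "complex^'n^'n"
  assumes "Am \<in> inner_inverses A"
    and "AGD \<in> gdrazin_inverses A"
  shows "(X = AGD ** A ** Am
          \<longleftrightarrow> X ** A ** X = X \<and> X ** A = AGD ** A \<and> A ** X = A ** Am \<and> A ** X ** A = A)
       \<and> (X ** A ** X = X \<and> X ** A = AGD ** A \<and> A ** X = A ** Am \<and> A ** X ** A = A
          \<longleftrightarrow> X ** A ** X = X \<and> X ** A = AGD ** A \<and> A ** X = A ** Am)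
       \<and> (X ** A ** X = X \<and> X ** A = AGD ** A \<and> A ** X = A ** Am
          \<longleftrightarrow> AGD ** A ** X = X \<and> X ** A = AGD ** A \<and> A ** X = A ** Am \<and> X ** A ** Am = X)"
proof -
  have Am: "A ** Am ** A = A"
    using assms(1) by (simp add: inner_inverses_def)
  have AGD: "A ** AGD ** A = A"
    using assms(2) by (simp add: gdrazin_inverses_def)
  have i_iff_iii: "X = AGD ** A ** Am
      \<longleftrightarrow> X ** A ** X = X \<and> X ** A = AGD ** A \<and> A ** X = A ** Am"
    using outer_inverse_of_inner_inverses[OF AGD Am] outer_inverse_unique[of X A AGD Am]
    by blast
  have iii_iff_iv: "X ** A ** X = X \<and> X ** A = AGD ** A \<and> A ** X = A ** Am
      \<longleftrightarrow> AGD ** A ** X = X \<and> X ** A = AGD ** A \<and> A ** X = A ** Am \<and> X ** A ** Am = X"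
    using outer_inverse_eqs_if_products_eq[of X A AGD Am] by metis
  show ?thesis
    using i_iff_iii iii_iff_iv inner_inverse_if_right_products_eq[OF Am, of X] by blast
qed

end
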